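(* Let $V$ be a bounded, noncompact operator in a Hilbert space $H$, and let $V_{i,j}$ ($i,j=0,1,2,\dots$) be its matrix in some orthonormal basis of $H$, satisfying $$ \lim_{n\to\infty} V_{n,n+p}=0\quad\text{for every } p\in\mathbb{Z}. $$ Let $b=\{b_i\}_{i=-\infty}^{\infty}$ be an arbitrary sequence with $\sum_{i=-\infty}^{\infty}|b_i|^2<\infty$. Then the operator $K$ whose matrix in the same basis is $K_{i,j}=b_{i-j}V_{i,j}$ ($i,j=0,1,2,\dots$) is a compact operator on $H$. *)

theory Defs
  imports "HOL-Analysis.Analysis"
begin

text \<open>The Hilbert space H with orthonormal basis (e_i), i = 0,1,2,..., is identified
  (unitarily) with l2(N, C): vectors are coefficient sequences, operators are matrices
  A i j = <e_i, A e_j>.\<close>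

definition is_l2 :: "(nat \<Rightarrow> complex) \<Rightarrow> bool" where
  "is_l2 x \<longleftrightarrow> summable (\<lambda>i. (cmod (x i))^2)"

definition l2norm :: "(nat \<Rightarrow> complex) \<Rightarrow> real" where
  "l2norm x = sqrt (\<Sum>i. (cmod (x i))^2)"

definition mat_apply :: "(nat \<Rightarrow> nat \<Rightarrow> complex) \<Rightarrow> (nat \<Rightarrow> complex) \<Rightarrow> (nat \<Rightarrow> complex)" where
  "mat_apply A x = (\<lambda>i. \<Sum>j. A i j * x j)"

definition bounded_matrix :: "(nat \<Rightarrow> nat \<Rightarrow> complex) \<Rightarrow> bool" where
  "bounded_matrix A \<longleftrightarrow>
     (\<exists>C. \<forall>x. is_l2 x \<longrightarrow>
        (\<forall>i. summable (\<lambda>j. A i j * x j)) \<and> is_l2 (mat_apply A x) \<and>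
        l2norm (mat_apply A x) \<le> C * l2norm x)"

definition compact_matrix :: "(nat \<Rightarrow> nat \<Rightarrow> complex) \<Rightarrow> bool" where
  "compact_matrix A \<longleftrightarrow>
     (\<forall>x :: nat \<Rightarrow> nat \<Rightarrow> complex. (\<forall>n. is_l2 (x n)) \<and> (\<exists>M. \<forall>n. l2norm (x n) \<le> M) \<longrightarrow>
        (\<exists>r y. strict_mono r \<and> is_l2 y \<and>
           (\<lambda>n. l2norm (\<lambda>i. mat_apply A (x (r n)) i - y i)) \<longlonglongrightarrow> 0))"

end

theory Submission
  imports Defs "HOL-Library.Diagonal_Subsequence"
begin

text \<open>The Schur product of a bounded matrix \<open>V\<close> with a Toeplitz matrix \<open>b (i - j)\<close> is bounded
  with norm at most \<open>\<parallel>V\<parallel> \<parallel>b\<parallel>\<^sub>2\<close>: on a finite section, expand the symbol in the characters of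
  \<open>\<int>/2n\<close> and use Parseval. Split \<open>b\<close> into a finitely supported part and a tail; the tail gives
  an operator of small norm. The banded part maps bounded, coordinatewise null sequences to
  norm null sequences, because the energy of \<open>V\<close> in a band around the diagonal of column \<open>j\<close>
  tends to zero as \<open>j \<rightarrow> \<infinity>\<close> when every diagonal of \<open>V\<close> tends to zero. Hence the
  multiplier itself has this property, which characterises compactness.\<close>

section \<open>Square-summable sequences\<close>

lemma sum_sq_le_l2norm_sq:
  assumes "is_l2 x"
  shows "(\<Sum>i<n. (cmod (x i))^2) \<le> (l2norm x)^2"
  using assms unfolding is_l2_def l2norm_def by (simp add: sum_le_suminf suminf_nonneg)

lemma L2_set_le_l2norm:
  assumes "is_l2 x"
  shows "L2_set (\<lambda>i. cmod (x i)) {..<n} \<le> l2norm x"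
proof -
  have "(\<Sum>i<n. (cmod (x i))^2) \<le> (\<Sum>i. (cmod (x i))^2)"
    using assms unfolding is_l2_def by (intro sum_le_suminf) auto
  then show ?thesis unfolding L2_set_def l2norm_def by simp
qed

lemma l2norm_nonneg: "is_l2 x \<Longrightarrow> l2norm x \<ge> 0"
  unfolding l2norm_def is_l2_def by (simp add: suminf_nonneg)

lemma norm_le_l2norm:
  assumes "is_l2 x"
  shows "cmod (x i) \<le> l2norm x"
proof -
  have "cmod (x i) \<le> L2_set (\<lambda>i. cmod (x i)) {..<Suc i}"
    by (rule member_le_L2_set) auto
  also have "\<dots> \<le> l2norm x" by (rule L2_set_le_l2norm[OF assms])
  finally show ?thesis .
qed

lemma is_l2_l2norm_leI:
  assumes "B \<ge> 0" "\<And>n. L2_set (\<lambda>i. cmod (x i)) {..<n} \<le> B"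
  shows "is_l2 x \<and> l2norm x \<le> B"
proof -
  have le: "(\<Sum>i<n. (cmod (x i))^2) \<le> B^2" for n
    using assms(2)[of n] unfolding L2_set_def by (rule sqrt_le_D)
  have s: "summable (\<lambda>i. (cmod (x i))^2)"
    by (rule summableI_nonneg_bounded[where x="B^2"]) (use le in auto)
  have "(\<Sum>i. (cmod (x i))^2) \<le> B^2"
    by (rule suminf_le_const[OF s]) (use le in auto)
  then have "sqrt (\<Sum>i. (cmod (x i))^2) \<le> B" using assms(1) real_le_lsqrt by auto
  with s show ?thesis unfolding is_l2_def l2norm_def by auto
qed

lemma l2norm_add_le:
  assumes a: "is_l2 a" and b: "is_l2 b"
  shows "is_l2 (\<lambda>i. a i + b i) \<and> l2norm (\<lambda>i. a i + b i) \<le> l2norm a + l2norm b"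
proof (rule is_l2_l2norm_leI)
  show "0 \<le> l2norm a + l2norm b" using l2norm_nonneg[OF a] l2norm_nonneg[OF b] by simp
  fix n
  have "L2_set (\<lambda>i. cmod (a i + b i)) {..<n} \<le> L2_set (\<lambda>i. cmod (a i) + cmod (b i)) {..<n}"
    by (rule L2_set_mono) (auto simp: norm_triangle_ineq)
  also have "\<dots> \<le> L2_set (\<lambda>i. cmod (a i)) {..<n} + L2_set (\<lambda>i. cmod (b i)) {..<n}"
    by (rule L2_set_triangle_ineq)
  also have "\<dots> \<le> l2norm a + l2norm b" by (intro add_mono L2_set_le_l2norm a b)
  finally show "L2_set (\<lambda>i. cmod (a i + b i)) {..<n} \<le> l2norm a + l2norm b" .
qed

lemma l2norm_diff_le:
  assumes "is_l2 a" "is_l2 b"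
  shows "is_l2 (\<lambda>i. a i - b i) \<and> l2norm (\<lambda>i. a i - b i) \<le> l2norm a + l2norm b"
proof -
  have "is_l2 (\<lambda>i. - b i)" "l2norm (\<lambda>i. - b i) = l2norm b"
    using assms(2) by (simp_all add: is_l2_def l2norm_def)
  with l2norm_add_le[OF assms(1) this(1)] show ?thesis by simp
qed

lemma l2norm_tendsto_zeroI:
  assumes "\<And>e. e > 0 \<Longrightarrow> \<forall>\<^sub>F n in sequentially. \<forall>m. (\<Sum>i<m. (cmod (w n i))^2) \<le> e"
  shows "(\<lambda>n. l2norm (w n)) \<longlonglongrightarrow> 0"
proof (rule tendstoI)
  fix e :: real assume e: "e > 0"
  have "\<forall>\<^sub>F n in sequentially. \<forall>m. (\<Sum>i<m. (cmod (w n i))^2) \<le> (e/2)^2"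
    using assms e by simp
  then show "\<forall>\<^sub>F n in sequentially. dist (l2norm (w n)) 0 < e"
  proof eventually_elim
    case (elim n)
    have "is_l2 (w n) \<and> l2norm (w n) \<le> e/2"
    proof (rule is_l2_l2norm_leI)
      show "L2_set (\<lambda>i. cmod (w n i)) {..<m} \<le> e/2" for m
        using elim e unfolding L2_set_def by (intro real_le_lsqrt) auto
    qed (use e in simp)
    with l2norm_nonneg[of "w n"] e show ?case by simp
  qed
qed

lemma le_if_square_le_mult:
  fixes s K :: real
  assumes "K \<ge> 0" "s^2 \<le> K * s"
  shows "s \<le> K"
proof (cases "s > 0")
  case True
  then show ?thesis using assms(2) mult_right_le_imp_le[of s s K] by (simp add: power2_eq_square)
qed (use assms(1) in linarith)

lemma tendsto_zero_if_approx:
  fixes s :: "nat \<Rightarrow> real"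
  assumes "\<And>n. s n \<ge> 0"
    and "\<And>e. e > 0 \<Longrightarrow> \<exists>u. u \<longlonglongrightarrow> 0 \<and> (\<forall>n. s n \<le> u n + e)"
  shows "s \<longlonglongrightarrow> 0"
proof (rule order_tendstoI)
  show "\<forall>\<^sub>F n in sequentially. a < s n" if "a < 0" for a
    using assms(1) that by (intro always_eventually allI) (rule less_le_trans)
  show "\<forall>\<^sub>F n in sequentially. s n < e" if e: "0 < e" for e
  proof -
    obtain u where u: "u \<longlonglongrightarrow> 0" "\<And>n. s n \<le> u n + e/2" using assms(2)[of "e/2"] e by auto
    have "\<forall>\<^sub>F n in sequentially. u n < e/2" using order_tendstoD(2)[OF u(1), of "e/2"] e by simp
    moreover have "s n < e" if "u n < e/2" for n using u(2)[of n] that by linarith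
    ultimately show ?thesis by (auto elim: eventually_mono)
  qed
qed

section \<open>Matrices of bounded operators\<close>

definition matrix_norm_le :: "(nat \<Rightarrow> nat \<Rightarrow> complex) \<Rightarrow> real \<Rightarrow> bool" where
  "matrix_norm_le A C \<longleftrightarrow>
     (\<forall>x. is_l2 x \<longrightarrow>
        (\<forall>i. summable (\<lambda>j. A i j * x j)) \<and> is_l2 (mat_apply A x) \<and>
        l2norm (mat_apply A x) \<le> C * l2norm x)"

lemma bounded_matrix_iff: "bounded_matrix A \<longleftrightarrow> (\<exists>C. matrix_norm_le A C)"
  unfolding bounded_matrix_def matrix_norm_le_def ..

lemma matrix_norm_leD:
  assumes "matrix_norm_le A C" "is_l2 x"
  shows "summable (\<lambda>j. A i j * x j)" "is_l2 (mat_apply A x)"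
    "l2norm (mat_apply A x) \<le> C * l2norm x"
  using assms unfolding matrix_norm_le_def by blast+

lemma mat_apply_diff:
  assumes "\<And>i. summable (\<lambda>j. A i j * x j)" "\<And>i. summable (\<lambda>j. A i j * y j)"
  shows "(\<lambda>i. mat_apply A x i - mat_apply A y i) = mat_apply A (\<lambda>j. x j - y j)"
  using suminf_diff[OF assms] by (simp add: mat_apply_def right_diff_distrib)

lemma mat_apply_add_matrix:
  assumes "\<And>i. summable (\<lambda>j. A i j * x j)" "\<And>i. summable (\<lambda>j. B i j * x j)"
  shows "mat_apply (\<lambda>i j. A i j + B i j) x = (\<lambda>i. mat_apply A x i + mat_apply B x i)"
  using suminf_add[OF assms] by (simp add: mat_apply_def distrib_right)

definition trunc :: "nat \<Rightarrow> (nat \<Rightarrow> complex) \<Rightarrow> nat \<Rightarrow> complex" where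
  "trunc m u = (\<lambda>j. if j < m then u j else 0)"

lemma is_l2_trunc: "is_l2 (trunc m u)"
  unfolding is_l2_def by (rule summable_finite[of "{..<m}"]) (auto simp: trunc_def)

lemma l2norm_trunc: "l2norm (trunc m u) = L2_set (\<lambda>j. cmod (u j)) {..<m}"
proof -
  have "(\<Sum>j. (cmod (trunc m u j))^2) = (\<Sum>j<m. (cmod (trunc m u j))^2)"
    by (rule suminf_finite) (auto simp: trunc_def)
  also have "\<dots> = (\<Sum>j<m. (cmod (u j))^2)" by (simp add: trunc_def)
  finally show ?thesis unfolding l2norm_def L2_set_def by simp
qed

lemma mat_apply_trunc: "mat_apply A (trunc m u) i = (\<Sum>j<m. A i j * u j)"
proof -
  have "(\<Sum>j. A i j * trunc m u j) = (\<Sum>j<m. A i j * trunc m u j)"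
    by (rule suminf_finite) (auto simp: trunc_def)
  then show ?thesis unfolding mat_apply_def by (simp add: trunc_def)
qed

lemma L2_set_trunc:
  assumes "n \<le> m"
  shows "L2_set (\<lambda>i. cmod (trunc n w i)) {..<m} = L2_set (\<lambda>i. cmod (w i)) {..<n}"
proof -
  have "(\<Sum>i<m. (cmod (trunc n w i))^2) = (\<Sum>i<n. (cmod (trunc n w i))^2)"
    using assms by (intro sum.mono_neutral_right) (auto simp: trunc_def)
  also have "\<dots> = (\<Sum>i<n. (cmod (w i))^2)" by (simp add: trunc_def)
  finally show ?thesis unfolding L2_set_def by simp
qed

lemma matrix_norm_le_nonneg:
  assumes "matrix_norm_le A C"
  shows "C \<ge> 0"
proof -
  define u where "u = trunc 1 (\<lambda>_. 1)"
  have "0 \<le> l2norm (mat_apply A u)"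
    unfolding u_def by (rule l2norm_nonneg[OF matrix_norm_leD(2)[OF assms is_l2_trunc]])
  also have "\<dots> \<le> C * l2norm u" unfolding u_def by (rule matrix_norm_leD(3)[OF assms is_l2_trunc])
  also have "l2norm u = 1" unfolding u_def l2norm_trunc by (simp add: L2_set_def)
  finally show ?thesis by simp
qed

lemma matrix_norm_le_row:
  assumes "matrix_norm_le A C"
  shows "L2_set (\<lambda>j. cmod (A i j)) {..<m} \<le> C"
proof -
  define u where "u = trunc m (\<lambda>j. cnj (A i j))"
  define s where "s = L2_set (\<lambda>j. cmod (A i j)) {..<m}"
  have "mat_apply A u i = (\<Sum>j<m. A i j * cnj (A i j))" unfolding u_def mat_apply_trunc ..
  also have "\<dots> = of_real (\<Sum>j<m. (cmod (A i j))^2)"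
    by (simp only: of_real_sum complex_norm_square)
  also have "(\<Sum>j<m. (cmod (A i j))^2) = s^2" unfolding s_def L2_set_def
    by (simp add: sum_nonneg)
  finally have "s^2 = cmod (mat_apply A u i)" by (simp add: norm_power)
  also have "\<dots> \<le> l2norm (mat_apply A u)"
    using matrix_norm_leD[OF assms is_l2_trunc] norm_le_l2norm unfolding u_def by blast
  also have "\<dots> \<le> C * s"
    using matrix_norm_leD(3)[OF assms is_l2_trunc, of m "\<lambda>j. cnj (A i j)"]
    unfolding u_def s_def l2norm_trunc by simp
  finally show ?thesis unfolding s_def[symmetric]
    by (rule le_if_square_le_mult[OF matrix_norm_le_nonneg[OF assms]])
qed

lemma matrix_norm_le_row_summable:
  assumes "matrix_norm_le A C" "is_l2 x"
  shows "summable (\<lambda>j. cmod (A i j) * cmod (x j))"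
proof (rule summableI_nonneg_bounded)
  fix m
  have "(\<Sum>j<m. cmod (A i j) * cmod (x j)) = (\<Sum>j<m. \<bar>cmod (A i j)\<bar> * \<bar>cmod (x j)\<bar>)" by simp
  also have "\<dots> \<le> L2_set (\<lambda>j. cmod (A i j)) {..<m} * L2_set (\<lambda>j. cmod (x j)) {..<m}"
    by (rule L2_set_mult_ineq)
  also have "\<dots> \<le> C * l2norm x"
    using matrix_norm_le_nonneg[OF assms(1)]
    by (intro mult_mono matrix_norm_le_row[OF assms(1)] L2_set_le_l2norm assms(2)) auto
  finally show "(\<Sum>j<m. cmod (A i j) * cmod (x j)) \<le> C * l2norm x" .
qed simp

lemma matrix_norm_le_bilinear:
  assumes "matrix_norm_le A C"
  shows "cmod (\<Sum>i<n. \<Sum>j<n. A i j * x j * cnj (y i))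
           \<le> C * L2_set (\<lambda>j. cmod (x j)) {..<n} * L2_set (\<lambda>i. cmod (y i)) {..<n}"
proof -
  define w where "w = mat_apply A (trunc n x)"
  have w: "is_l2 w" "l2norm w \<le> C * L2_set (\<lambda>j. cmod (x j)) {..<n}"
    using matrix_norm_leD[OF assms is_l2_trunc] unfolding w_def l2norm_trunc by blast+
  have "(\<Sum>i<n. \<Sum>j<n. A i j * x j * cnj (y i)) = (\<Sum>i<n. w i * cnj (y i))"
    unfolding w_def mat_apply_trunc by (simp add: sum_distrib_right)
  then have "cmod (\<Sum>i<n. \<Sum>j<n. A i j * x j * cnj (y i)) \<le> (\<Sum>i<n. \<bar>cmod (w i)\<bar> * \<bar>cmod (y i)\<bar>)"
    by (metis (no_types, lifting) abs_norm_cancel complex_mod_cnj norm_mult norm_sum sum.cong)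
  also have "\<dots> \<le> L2_set (\<lambda>i. cmod (w i)) {..<n} * L2_set (\<lambda>i. cmod (y i)) {..<n}"
    by (rule L2_set_mult_ineq)
  also have "\<dots> \<le> C * L2_set (\<lambda>j. cmod (x j)) {..<n} * L2_set (\<lambda>i. cmod (y i)) {..<n}"
    by (intro mult_right_mono order_trans[OF L2_set_le_l2norm[OF w(1)] w(2)]) auto
  finally show ?thesis .
qed

text \<open>The partial sums of \<open>\<bar>A x\<bar>\<^sup>2\<close> are limits of finite sections of the bilinear form tested
  against a truncation of \<open>A x\<close>.\<close>

lemma matrix_norm_le_if_bilinear_le:
  assumes D: "D \<ge> 0"
    and summable: "\<And>x i. is_l2 x \<Longrightarrow> summable (\<lambda>j. A i j * x j)"
    and bilinear: "\<And>n u y. cmod (\<Sum>i<n. \<Sum>j<n. A i j * u j * cnj (y i))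
                     \<le> D * L2_set (\<lambda>j. cmod (u j)) {..<n} * L2_set (\<lambda>i. cmod (y i)) {..<n}"
  shows "matrix_norm_le A D"
  unfolding matrix_norm_le_def
proof (intro allI impI)
  fix x assume x: "is_l2 x"
  define w where "w = mat_apply A x"
  have "L2_set (\<lambda>i. cmod (w i)) {..<n} \<le> D * l2norm x" for n
  proof -
    define L where "L = L2_set (\<lambda>i. cmod (w i)) {..<n}"
    define S where "S m = (\<Sum>i<n. (\<Sum>j<m. A i j * x j) * cnj (w i))" for m
    have "(\<lambda>m. cmod (S m)) \<longlonglongrightarrow> cmod (\<Sum>i<n. w i * cnj (w i))"
      unfolding S_def w_def mat_apply_def
      by (intro tendsto_intros summable_LIMSEQ summable x)
    also have "(\<Sum>i<n. w i * cnj (w i)) = of_real (\<Sum>i<n. (cmod (w i))^2)"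
      by (simp only: of_real_sum complex_norm_square)
    also have "(\<Sum>i<n. (cmod (w i))^2) = L^2"
      unfolding L_def L2_set_def by (simp add: sum_nonneg)
    finally have lim: "(\<lambda>m. cmod (S m)) \<longlonglongrightarrow> L^2" by (simp add: norm_power)
    have "cmod (S m) \<le> D * l2norm x * L" if "n \<le> m" for m
    proof -
      have "S m = (\<Sum>i<m. \<Sum>j<m. A i j * x j * cnj (trunc n w i))"
        unfolding S_def using that
        by (intro sum.mono_neutral_cong_left) (auto simp: trunc_def sum_distrib_right)
      also have "cmod \<dots> \<le> D * L2_set (\<lambda>j. cmod (x j)) {..<m} * L"
        using bilinear[where n=m and u=x and y="trunc n w"] unfolding L_def L2_set_trunc[OF that] .
      also have "\<dots> \<le> D * l2norm x * L"
        using D by (intro mult_right_mono mult_left_mono L2_set_le_l2norm x) (auto simp: L_def)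
      finally show ?thesis .
    qed
    then have "L^2 \<le> D * l2norm x * L"
      by (intro tendsto_upperbound[OF lim] eventually_sequentiallyI) auto
    moreover have "D * l2norm x \<ge> 0" using D l2norm_nonneg[OF x] by simp
    ultimately show ?thesis unfolding L_def[symmetric] by (rule le_if_square_le_mult[rotated])
  qed
  then have "is_l2 w \<and> l2norm w \<le> D * l2norm x"
    using D l2norm_nonneg[OF x] by (intro is_l2_l2norm_leI) auto
  with summable[OF x] show "(\<forall>i. summable (\<lambda>j. A i j * x j)) \<and> is_l2 (mat_apply A x) \<and>
      l2norm (mat_apply A x) \<le> D * l2norm x"
    unfolding w_def by auto
qed

section \<open>Toeplitz Schur multipliers\<close>

definition schur_toeplitz :: "(int \<Rightarrow> complex) \<Rightarrow> (nat \<Rightarrow> nat \<Rightarrow> complex) \<Rightarrow> nat \<Rightarrow> nat \<Rightarrow> complex" where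
  "schur_toeplitz c A = (\<lambda>i j. c (int i - int j) * A i j)"

definition dft_kernel :: "nat \<Rightarrow> nat \<Rightarrow> int \<Rightarrow> complex" where
  "dft_kernel N k m = cis (2 * pi * real k * of_int m / real N)"

lemma dft_kernel_mult: "dft_kernel N k a * dft_kernel N k b = dft_kernel N k (a + b)"
  unfolding dft_kernel_def by (simp add: cis_mult algebra_simps add_divide_distrib)

lemma cnj_dft_kernel: "cnj (dft_kernel N k a) = dft_kernel N k (- a)"
  unfolding dft_kernel_def by (simp add: cis_cnj)

lemma norm_dft_kernel [simp]: "cmod (dft_kernel N k a) = 1"
  unfolding dft_kernel_def by simp

lemma sum_dft_kernel:
  assumes "N > 0" "\<bar>m\<bar> < int N"
  shows "(\<Sum>k<N. dft_kernel N k m) = (if m = 0 then of_nat N else 0)"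
proof (cases "m = 0")
  case True then show ?thesis by (simp add: dft_kernel_def)
next
  case False
  define z where "z = cis (2 * pi * of_int m / real N)"
  have zk: "dft_kernel N k m = z ^ k" for k
  proof -
    have "z ^ k = cis (real k * (2 * pi * of_int m / real N))" unfolding z_def by (rule Complex.DeMoivre)
    then show ?thesis unfolding dft_kernel_def by (simp add: algebra_simps)
  qed
  have "z \<noteq> 1"
  proof
    assume "z = 1"
    then have "cos (2 * pi * of_int m / real N) = 1" unfolding z_def
      by (metis cis.sel(1) one_complex.sel(1))
    then obtain j :: int where "2 * pi * of_int m / real N = of_int j * 2 * pi"
      using cos_one_2pi_int by blast
    then have "real_of_int m = real_of_int (j * int N)" using assms(1) by (simp add: field_simps)
    then have mj: "m = j * int N" by (simp only: of_int_eq_iff)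
    with False have "1 \<le> \<bar>j\<bar>" by auto
    then have "int N \<le> \<bar>m\<bar>" unfolding mj abs_mult by (simp add: mult_le_cancel_right1)
    with assms(2) show False by simp
  qed
  have "z ^ N = cis (real N * (2 * pi * of_int m / real N))" unfolding z_def by (rule Complex.DeMoivre)
  also have "\<dots> = 1" using assms(1) by (simp add: cis_multiple_2pi)
  finally have "z ^ N = 1" .
  then have "(\<Sum>k<N. z ^ k) = 0" using \<open>z \<noteq> 1\<close> by (simp add: sum_gp_strict)
  then show ?thesis using False by (simp add: zk)
qed

lemma dft_inversion:
  assumes "finite P" "N > 0" "\<And>p q. p \<in> P \<Longrightarrow> q \<in> P \<Longrightarrow> \<bar>p - q\<bar> < int N" "d \<in> P"
  shows "c d = (\<Sum>k<N. (\<Sum>p\<in>P. c p * dft_kernel N k p) * dft_kernel N k (- d)) / of_nat N"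
proof -
  have "(\<Sum>k<N. (\<Sum>p\<in>P. c p * dft_kernel N k p) * dft_kernel N k (- d))
      = (\<Sum>p\<in>P. c p * (\<Sum>k<N. dft_kernel N k (p - d)))"
    by (simp add: sum_distrib_left sum_distrib_right mult.assoc dft_kernel_mult sum.swap[of _ "{..<N}"])
  also have "\<dots> = (\<Sum>p\<in>P. if p = d then c p * of_nat N else 0)"
    using sum_dft_kernel[OF assms(2)] assms(3)[OF _ assms(4)] by (intro sum.cong refl) simp
  also have "\<dots> = c d * of_nat N" using assms(1,4) by (simp add: sum.delta')
  finally show ?thesis using assms(2) by simp
qed

lemma dft_parseval:
  assumes "finite P" "N > 0" "\<And>p q. p \<in> P \<Longrightarrow> q \<in> P \<Longrightarrow> \<bar>p - q\<bar> < int N"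
  shows "(\<Sum>k<N. (cmod (\<Sum>p\<in>P. c p * dft_kernel N k p))^2) = real N * (\<Sum>p\<in>P. (cmod (c p))^2)"
proof -
  define f where "f k = (\<Sum>p\<in>P. c p * dft_kernel N k p)" for k
  have "complex_of_real (\<Sum>k<N. (cmod (f k))^2) = (\<Sum>k<N. f k * cnj (f k))"
    by (simp only: of_real_sum complex_norm_square)
  also have "\<dots> = (\<Sum>q\<in>P. \<Sum>p\<in>P. c p * cnj (c q) * (\<Sum>k<N. dft_kernel N k (p - q)))"
    unfolding f_def
    by (simp add: sum_distrib_left sum_distrib_right cnj_dft_kernel dft_kernel_mult mult_ac
        sum.swap[of _ "{..<N}"])
  also have "\<dots> = (\<Sum>q\<in>P. \<Sum>p\<in>P. if p = q then c p * cnj (c q) * of_nat N else 0)"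
    using sum_dft_kernel[OF assms(2)] assms(3) by (intro sum.cong refl) auto
  also have "\<dots> = (\<Sum>q\<in>P. c q * cnj (c q) * of_nat N)"
    using assms(1) by (simp add: sum.delta')
  also have "\<dots> = complex_of_real (real N * (\<Sum>p\<in>P. (cmod (c p))^2))"
    by (simp only: of_real_mult of_real_sum of_real_of_nat_eq complex_norm_square sum_distrib_left mult_ac)
  finally show ?thesis unfolding f_def by (simp only: of_real_eq_iff)
qed

lemma dft_l1_le:
  assumes "finite P" "N > 0" "\<And>p q. p \<in> P \<Longrightarrow> q \<in> P \<Longrightarrow> \<bar>p - q\<bar> < int N"
    and "B \<ge> 0" "(\<Sum>p\<in>P. (cmod (c p))^2) \<le> B^2"
  shows "(\<Sum>k<N. cmod (\<Sum>p\<in>P. c p * dft_kernel N k p)) \<le> real N * B"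
proof -
  have "(\<Sum>k<N. \<bar>1\<bar> * \<bar>cmod (\<Sum>p\<in>P. c p * dft_kernel N k p)\<bar>)
      \<le> L2_set (\<lambda>_. 1) {..<N} * L2_set (\<lambda>k. cmod (\<Sum>p\<in>P. c p * dft_kernel N k p)) {..<N}"
    by (rule L2_set_mult_ineq)
  then have "(\<Sum>k<N. cmod (\<Sum>p\<in>P. c p * dft_kernel N k p))
      \<le> L2_set (\<lambda>_. 1) {..<N} * L2_set (\<lambda>k. cmod (\<Sum>p\<in>P. c p * dft_kernel N k p)) {..<N}"
    by simp
  also have "\<dots> = sqrt (real N) * sqrt (real N * (\<Sum>p\<in>P. (cmod (c p))^2))"
    by (simp add: L2_set_constant L2_set_def dft_parseval[OF assms(1-3)])
  also have "\<dots> \<le> sqrt (real N) * sqrt (real N * B^2)"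
    using assms(5) by (intro mult_left_mono real_sqrt_le_mono) auto
  also have "\<dots> = real N * B" using assms(4) by (simp add: real_sqrt_mult)
  finally show ?thesis .
qed

lemma toeplitz_symbol_dft:
  fixes c :: "int \<Rightarrow> complex"
  assumes "i < n" "j < n"
  defines "N \<equiv> 2 * n"
  shows "c (int i - int j) = (\<Sum>k<N. (\<Sum>p\<in>{-int n + 1..int n - 1}. c p * dft_kernel N k p)
    * (dft_kernel N k (int j) * cnj (dft_kernel N k (int i)))) / of_nat N"
proof -
  have "c (int i - int j) = (\<Sum>k<N. (\<Sum>p\<in>{-int n + 1..int n - 1}. c p * dft_kernel N k p)
      * dft_kernel N k (- (int i - int j))) / of_nat N"
    using assms by (intro dft_inversion) auto
  then show ?thesis by (simp add: cnj_dft_kernel dft_kernel_mult)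
qed

lemma schur_toeplitz_section_dft:
  fixes A :: "nat \<Rightarrow> nat \<Rightarrow> complex" and c :: "int \<Rightarrow> complex" and n :: nat
  defines "N \<equiv> 2 * n"
  shows "(\<Sum>i<n. \<Sum>j<n. schur_toeplitz c A i j * x j * cnj (y i))
    = (\<Sum>k<N. (\<Sum>p\<in>{-int n + 1..int n - 1}. c p * dft_kernel N k p) / of_nat N *
        (\<Sum>i<n. \<Sum>j<n. A i j * (x j * dft_kernel N k (int j)) * cnj (y i * dft_kernel N k (int i))))"
proof -
  define f where "f k = (\<Sum>p\<in>{-int n + 1..int n - 1}. c p * dft_kernel N k p)" for k
  have "schur_toeplitz c A i j * x j * cnj (y i) = (\<Sum>k<N.
      f k / of_nat N * (A i j * (x j * dft_kernel N k (int j)) * cnj (y i * dft_kernel N k (int i))))"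
    if "i < n" "j < n" for i j
  proof -
    have "c (int i - int j)
        = (\<Sum>k<N. f k * (dft_kernel N k (int j) * cnj (dft_kernel N k (int i)))) / of_nat N"
      unfolding f_def N_def by (rule toeplitz_symbol_dft[OF that])
    then show ?thesis
      unfolding schur_toeplitz_def by (simp add: sum_distrib_left sum_distrib_right sum_divide_distrib mult_ac)
  qed
  then have "(\<Sum>i<n. \<Sum>j<n. schur_toeplitz c A i j * x j * cnj (y i)) = (\<Sum>i<n. \<Sum>j<n. \<Sum>k<N.
      f k / of_nat N * (A i j * (x j * dft_kernel N k (int j)) * cnj (y i * dft_kernel N k (int i))))"
    by (intro sum.cong refl) auto
  also have "\<dots> = (\<Sum>k<N. f k / of_nat N *
      (\<Sum>i<n. \<Sum>j<n. A i j * (x j * dft_kernel N k (int j)) * cnj (y i * dft_kernel N k (int i))))"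
    unfolding sum_distrib_left by (subst sum.swap) (simp add: sum.swap[of _ "{..<N}"])
  finally show ?thesis unfolding f_def .
qed

text \<open>Each character of \<open>\<int>/2n\<close> acts on the finite section as a pair of unimodular diagonal
  multiplications, which preserve the bilinear bound, and the \<open>\<ell>\<^sup>1\<close>-norm of the transform of the
  symbol costs only its \<open>\<ell>\<^sup>2\<close>-norm by Parseval.\<close>

lemma schur_toeplitz_bilinear_le:
  fixes A :: "nat \<Rightarrow> nat \<Rightarrow> complex" and c :: "int \<Rightarrow> complex"
  assumes C: "C \<ge> 0"
    and A: "\<And>x y. cmod (\<Sum>i<n. \<Sum>j<n. A i j * x j * cnj (y i))
               \<le> C * L2_set (\<lambda>j. cmod (x j)) {..<n} * L2_set (\<lambda>i. cmod (y i)) {..<n}"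
    and B: "B \<ge> 0" "\<And>F. finite F \<Longrightarrow> (\<Sum>p\<in>F. (cmod (c p))^2) \<le> B^2"
  shows "cmod (\<Sum>i<n. \<Sum>j<n. schur_toeplitz c A i j * x j * cnj (y i))
          \<le> C * B * L2_set (\<lambda>j. cmod (x j)) {..<n} * L2_set (\<lambda>i. cmod (y i)) {..<n}"
proof (cases "n = 0")
  case True then show ?thesis by simp
next
  case False
  define N where "N = 2 * n"
  define P where "P = {- int n + 1 .. int n - 1}"
  define f where "f k = (\<Sum>p\<in>P. c p * dft_kernel N k p)" for k
  define X where "X = L2_set (\<lambda>j. cmod (x j)) {..<n}"
  define Y where "Y = L2_set (\<lambda>i. cmod (y i)) {..<n}"
  define T where "T k = (\<Sum>i<n. \<Sum>j<n.
      A i j * (x j * dft_kernel N k (int j)) * cnj (y i * dft_kernel N k (int i)))" for k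
  have N: "N > 0" using False unfolding N_def by simp
  have P: "finite P" unfolding P_def by simp
  have diam: "\<bar>p - q\<bar> < int N" if "p \<in> P" "q \<in> P" for p q using that unfolding P_def N_def by auto
  have T: "cmod (T k) \<le> C * X * Y" for k
    using A[of "\<lambda>j. x j * dft_kernel N k (int j)" "\<lambda>i. y i * dft_kernel N k (int i)"]
    unfolding T_def X_def Y_def by (simp add: norm_mult)
  have "cmod (\<Sum>i<n. \<Sum>j<n. schur_toeplitz c A i j * x j * cnj (y i)) = cmod (\<Sum>k<N. f k / of_nat N * T k)"
    unfolding schur_toeplitz_section_dft f_def T_def P_def N_def ..
  also have "\<dots> \<le> (\<Sum>k<N. cmod (f k) / real N * (C * X * Y))"
  proof (intro order_trans[OF norm_sum] sum_mono)
    fix k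
    have "cmod (f k / of_nat N * T k) = cmod (f k) / real N * cmod (T k)"
      by (simp add: norm_mult norm_divide)
    also have "\<dots> \<le> cmod (f k) / real N * (C * X * Y)" using T[of k] by (intro mult_left_mono) auto
    finally show "cmod (f k / of_nat N * T k) \<le> cmod (f k) / real N * (C * X * Y)" .
  qed
  also have "\<dots> = (\<Sum>k<N. cmod (f k)) / real N * (C * X * Y)"
    by (simp add: sum_divide_distrib sum_distrib_right)
  also have "\<dots> \<le> real N * B / real N * (C * X * Y)"
    using dft_l1_le[OF P N diam B(1) B(2)[OF P]] C unfolding f_def X_def Y_def
    by (intro mult_right_mono divide_right_mono) auto
  finally show ?thesis using N unfolding X_def Y_def by (simp add: mult_ac)
qed

lemma matrix_norm_le_schur_toeplitz:
  assumes A: "matrix_norm_le A C"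
    and B: "B \<ge> 0" "\<And>F. finite F \<Longrightarrow> (\<Sum>p\<in>F. (cmod (c p))^2) \<le> B^2"
  shows "matrix_norm_le (schur_toeplitz c A) (C * B)"
proof (rule matrix_norm_le_if_bilinear_le)
  show "C * B \<ge> 0" using matrix_norm_le_nonneg[OF A] B(1) by simp
  have c: "cmod (c p) \<le> B" for p
  proof -
    have "(cmod (c p))^2 \<le> B^2" using B(2)[of "{p}"] by simp
    then show ?thesis using B(1) by (rule power2_le_imp_le)
  qed
  show "summable (\<lambda>j. schur_toeplitz c A i j * x j)" if "is_l2 x" for x i
  proof (rule summable_comparison_test)
    show "summable (\<lambda>j. B * (cmod (A i j) * cmod (x j)))"
      by (intro summable_mult matrix_norm_le_row_summable[OF A that])
    show "\<exists>N. \<forall>j\<ge>N. norm (schur_toeplitz c A i j * x j) \<le> B * (cmod (A i j) * cmod (x j))"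
      using c by (intro exI[of _ 0] allI impI)
        (simp add: schur_toeplitz_def norm_mult mult.assoc mult_right_mono)
  qed
  show "cmod (\<Sum>i<n. \<Sum>j<n. schur_toeplitz c A i j * u j * cnj (y i))
          \<le> C * B * L2_set (\<lambda>j. cmod (u j)) {..<n} * L2_set (\<lambda>i. cmod (y i)) {..<n}" for n u y
    by (rule schur_toeplitz_bilinear_le[OF matrix_norm_le_nonneg[OF A]
          matrix_norm_le_bilinear[OF A] B])
qed

section \<open>Banded multipliers and vanishing diagonals\<close>

definition vanishing_diagonals :: "(nat \<Rightarrow> nat \<Rightarrow> complex) \<Rightarrow> bool" where
  "vanishing_diagonals A \<longleftrightarrow> (\<forall>p::int. (\<lambda>n. A n (nat (int n + p))) \<longlonglongrightarrow> 0)"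

lemma vanishing_diagonals_column:
  assumes "vanishing_diagonals A"
  shows "(\<lambda>j. A (nat (int j + q)) j) \<longlonglongrightarrow> 0"
proof -
  define h where "h n = A n (nat (int n + (- q)))" for n
  have "h \<longlonglongrightarrow> 0" using assms unfolding h_def vanishing_diagonals_def by blast
  moreover have "filterlim (\<lambda>j. nat (int j + q)) sequentially sequentially"
    unfolding filterlim_at_top
  proof
    fix Z :: nat
    show "\<forall>\<^sub>F j in sequentially. Z \<le> nat (int j + q)"
      by (rule eventually_sequentiallyI[of "Z + nat (- q)"]) linarith
  qed
  ultimately have "(\<lambda>j. h (nat (int j + q))) \<longlonglongrightarrow> 0" by (rule filterlim_compose)
  moreover have "\<forall>\<^sub>F j in sequentially. h (nat (int j + q)) = A (nat (int j + q)) j"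
  proof (rule eventually_sequentiallyI[of "nat (- q)"])
    fix j assume "nat (- q) \<le> j"
    then have "nat (int (nat (int j + q)) + - q) = j" by linarith
    then show "h (nat (int j + q)) = A (nat (int j + q)) j" unfolding h_def by simp
  qed
  ultimately show ?thesis by (rule Lim_transform_eventually)
qed

lemma vanishing_diagonals_column_band:
  assumes "vanishing_diagonals A"
  shows "(\<lambda>j. \<Sum>i\<in>{j-N..j+N}. (cmod (A i j))^2) \<longlonglongrightarrow> 0"
proof -
  have "(\<lambda>j. \<Sum>q\<in>{-int N..int N}. (cmod (A (nat (int j + q)) j))^2)
      \<longlonglongrightarrow> (\<Sum>q\<in>{-int N..int N}. (cmod 0)^2)"
    by (intro tendsto_intros vanishing_diagonals_column[OF assms])
  then have lim: "(\<lambda>j. \<Sum>q\<in>{-int N..int N}. (cmod (A (nat (int j + q)) j))^2) \<longlonglongrightarrow> 0" by simp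
  have "\<forall>\<^sub>F j in sequentially. (\<Sum>q\<in>{-int N..int N}. (cmod (A (nat (int j + q)) j))^2)
      = (\<Sum>i\<in>{j-N..j+N}. (cmod (A i j))^2)"
  proof (rule eventually_sequentiallyI[of N])
    fix j assume j: "N \<le> j"
    have inj: "inj_on (\<lambda>q. nat (int j + q)) {-int N..int N}"
      using j by (auto simp: inj_on_def)
    have "(\<lambda>q. nat (int j + q)) ` {-int N..int N} = {j-N..j+N}"
    proof
      show "(\<lambda>q. nat (int j + q)) ` {-int N..int N} \<subseteq> {j-N..j+N}" using j by auto
      show "{j-N..j+N} \<subseteq> (\<lambda>q. nat (int j + q)) ` {-int N..int N}"
      proof
        fix i assume "i \<in> {j-N..j+N}"
        then have "i = nat (int j + (int i - int j))" "int i - int j \<in> {-int N..int N}" using j by auto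
        then show "i \<in> (\<lambda>q. nat (int j + q)) ` {-int N..int N}" by blast
      qed
    qed
    then show "(\<Sum>q\<in>{-int N..int N}. (cmod (A (nat (int j + q)) j))^2)
        = (\<Sum>i\<in>{j-N..j+N}. (cmod (A i j))^2)"
      by (metis (no_types, lifting) inj sum.reindex_cong)
  qed
  with lim show ?thesis by (rule Lim_transform_eventually)
qed

lemma sum_band_swap_le:
  fixes h :: "nat \<Rightarrow> nat \<Rightarrow> real"
  assumes h0: "\<And>i j. h i j \<ge> 0"
  shows "(\<Sum>i<m. \<Sum>j\<in>{i-N..i+N}. h i j) \<le> (\<Sum>j<m+N. \<Sum>i\<in>{j-N..j+N}. h i j)"
proof -
  define L where "L = m + N"
  have "(\<Sum>i<m. \<Sum>j\<in>{i-N..i+N}. h i j) = (\<Sum>i<m. \<Sum>j<L. if j \<in> {i-N..i+N} then h i j else 0)"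
  proof (rule sum.cong[OF refl])
    fix i assume "i \<in> {..<m}"
    then have "{..<L} \<inter> {i-N..i+N} = {i-N..i+N}" unfolding L_def by auto
    then show "(\<Sum>j\<in>{i-N..i+N}. h i j) = (\<Sum>j<L. if j \<in> {i-N..i+N} then h i j else 0)"
      using sum.inter_restrict[of "{..<L}" "h i" "{i-N..i+N}"] by simp
  qed
  also have "\<dots> \<le> (\<Sum>i<L. \<Sum>j<L. if j \<in> {i-N..i+N} then h i j else 0)"
    by (rule sum_mono2) (auto simp: L_def h0 intro!: sum_nonneg)
  also have "\<dots> = (\<Sum>j<L. \<Sum>i<L. if i \<in> {j-N..j+N} then h i j else 0)"
    by (subst sum.swap) (intro sum.cong refl if_cong, auto)
  also have "\<dots> \<le> (\<Sum>j<L. \<Sum>i\<in>{j-N..j+N}. h i j)"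
  proof (rule sum_mono)
    fix j
    have "(\<Sum>i<L. if i \<in> {j-N..j+N} then h i j else 0) = (\<Sum>i\<in>{..<L} \<inter> {j-N..j+N}. h i j)"
      using sum.inter_restrict[of "{..<L}" "\<lambda>i. h i j" "{j-N..j+N}"] by simp
    also have "\<dots> \<le> (\<Sum>i\<in>{j-N..j+N}. h i j)" by (rule sum_mono2) (auto simp: h0)
    finally show "(\<Sum>i<L. if i \<in> {j-N..j+N} then h i j else 0) \<le> (\<Sum>i\<in>{j-N..j+N}. h i j)" .
  qed
  finally show ?thesis unfolding L_def .
qed

lemma schur_toeplitz_band_partial_le:
  assumes supp: "\<And>p. \<bar>p\<bar> > int N \<Longrightarrow> c p = 0" and c: "\<And>p. cmod (c p) \<le> \<beta>"
  shows "(\<Sum>i<m. (cmod (mat_apply (schur_toeplitz c A) u i))^2)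
    \<le> real (2*N+1) * \<beta>^2 * (\<Sum>j<m+N. (cmod (u j))^2 * (\<Sum>i\<in>{j-N..j+N}. (cmod (A i j))^2))"
proof -
  define W where "W = schur_toeplitz c A"
  have row: "(cmod (mat_apply W u i))^2
      \<le> real (2*N+1) * \<beta>^2 * (\<Sum>j\<in>{i-N..i+N}. (cmod (A i j))^2 * (cmod (u j))^2)" for i
  proof -
    have "W i j = 0" if "j \<notin> {i-N..i+N}" for j
      using that supp unfolding W_def schur_toeplitz_def by auto
    then have app: "mat_apply W u i = (\<Sum>j\<in>{i-N..i+N}. W i j * u j)"
      unfolding mat_apply_def by (intro suminf_finite) auto
    have "(cmod (mat_apply W u i))^2 \<le> (\<Sum>j\<in>{i-N..i+N}. cmod (W i j * u j))^2"
      unfolding app by (intro power_mono norm_sum) auto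
    also have "\<dots> \<le> (\<Sum>j\<in>{i-N..i+N}. (cmod (W i j * u j))^2) * card {i-N..i+N}"
      by (rule sum_squared_le_sum_of_squares)
    also have "\<dots> \<le> (\<Sum>j\<in>{i-N..i+N}. \<beta>^2 * ((cmod (A i j))^2 * (cmod (u j))^2)) * real (2*N+1)"
    proof (rule mult_mono)
      show "(\<Sum>j\<in>{i-N..i+N}. (cmod (W i j * u j))^2)
          \<le> (\<Sum>j\<in>{i-N..i+N}. \<beta>^2 * ((cmod (A i j))^2 * (cmod (u j))^2))"
      proof (rule sum_mono)
        fix j
        have "(cmod (c (int i - int j)))^2 \<le> \<beta>^2" using c by (intro power_mono) auto
        then show "(cmod (W i j * u j))^2 \<le> \<beta>^2 * ((cmod (A i j))^2 * (cmod (u j))^2)"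
          unfolding W_def schur_toeplitz_def
          by (simp add: norm_mult power_mult_distrib mult.assoc mult_right_mono)
      qed
    qed (auto intro: sum_nonneg)
    also have "\<dots> = real (2*N+1) * \<beta>^2 * (\<Sum>j\<in>{i-N..i+N}. (cmod (A i j))^2 * (cmod (u j))^2)"
      by (simp add: sum_distrib_left mult_ac)
    finally show ?thesis .
  qed
  have "(\<Sum>i<m. (cmod (mat_apply W u i))^2)
      \<le> (\<Sum>i<m. real (2*N+1) * \<beta>^2 * (\<Sum>j\<in>{i-N..i+N}. (cmod (A i j))^2 * (cmod (u j))^2))"
    by (rule sum_mono) (rule row)
  also have "\<dots> = real (2*N+1) * \<beta>^2 * (\<Sum>i<m. \<Sum>j\<in>{i-N..i+N}. (cmod (A i j))^2 * (cmod (u j))^2)"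
    by (rule sum_distrib_left[symmetric])
  also have "\<dots> \<le> real (2*N+1) * \<beta>^2 * (\<Sum>j<m+N. \<Sum>i\<in>{j-N..j+N}. (cmod (A i j))^2 * (cmod (u j))^2)"
    by (intro mult_left_mono sum_band_swap_le) auto
  finally show ?thesis unfolding W_def by (simp add: sum_distrib_left mult_ac)
qed

lemma weighted_sum_eventually_le:
  fixes a :: "nat \<Rightarrow> nat \<Rightarrow> real" and g :: "nat \<Rightarrow> real"
  assumes a: "\<And>n j. a n j \<ge> 0" and g: "\<And>j. g j \<ge> 0" "g \<longlonglongrightarrow> 0"
    and lim: "\<And>j. (\<lambda>n. a n j) \<longlonglongrightarrow> 0" and bound: "\<And>n m. (\<Sum>j<m. a n j) \<le> M"
    and e: "e > 0"
  shows "\<forall>\<^sub>F n in sequentially. \<forall>m. (\<Sum>j<m. a n j * g j) \<le> e"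
proof -
  have M: "M \<ge> 0" using bound[of _ 0] by simp
  define \<delta> where "\<delta> = e / (2 * (M + 1))"
  have \<delta>: "\<delta> > 0" "\<delta> * M \<le> e / 2"
    using M e unfolding \<delta>_def by (auto simp: field_simps)
  obtain J where J: "\<And>j. j \<ge> J \<Longrightarrow> g j < \<delta>"
    using order_tendstoD(2)[OF g(2) \<delta>(1)] unfolding eventually_sequentially by blast
  have "(\<lambda>n. \<Sum>j<J. a n j * g j) \<longlonglongrightarrow> (\<Sum>j<J. 0 * g j)"
    by (intro tendsto_intros lim)
  then have "\<forall>\<^sub>F n in sequentially. (\<Sum>j<J. a n j * g j) < e / 2"
    using e by (intro order_tendstoD(2)) auto
  then show ?thesis
  proof eventually_elim
    case (elim n)
    show ?case
    proof
      fix m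
      have "a n j * g j \<le> (if j < J then a n j * g j else 0) + \<delta> * a n j" for j
      proof (cases "j < J")
        case False
        then have "a n j * g j \<le> a n j * \<delta>" using J a by (intro mult_left_mono) (auto simp: less_imp_le)
        with False show ?thesis by (simp add: mult.commute)
      qed (use a \<delta>(1) in simp)
      then have "(\<Sum>j<m. a n j * g j) \<le> (\<Sum>j<m. (if j < J then a n j * g j else 0) + \<delta> * a n j)"
        by (rule sum_mono)
      also have "\<dots> = (\<Sum>j\<in>{..<m} \<inter> {..<J}. a n j * g j) + \<delta> * (\<Sum>j<m. a n j)"
        by (simp add: sum.distrib sum_distrib_left sum.inter_restrict)
      also have "\<dots> \<le> (\<Sum>j<J. a n j * g j) + \<delta> * M"
        using a g \<delta>(1) bound by (intro add_mono sum_mono2 mult_left_mono) auto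
      finally show "(\<Sum>j<m. a n j * g j) \<le> e" using elim \<delta>(2) by linarith
    qed
  qed
qed

lemma schur_toeplitz_band_null:
  assumes A: "vanishing_diagonals A"
    and supp: "\<And>p. \<bar>p\<bar> > int N \<Longrightarrow> c p = 0" and c: "\<And>p. cmod (c p) \<le> \<beta>"
    and z: "\<And>n m. (\<Sum>j<m. (cmod (z n j))^2) \<le> M" "\<And>j. (\<lambda>n. z n j) \<longlonglongrightarrow> 0"
  shows "(\<lambda>n. l2norm (mat_apply (schur_toeplitz c A) (z n))) \<longlonglongrightarrow> 0"
proof (rule l2norm_tendsto_zeroI)
  fix e :: real assume e: "e > 0"
  define K where "K = real (2*N+1) * \<beta>^2"
  have K: "K \<ge> 0" unfolding K_def by simp
  have "\<forall>\<^sub>F n in sequentially.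
      \<forall>m. (\<Sum>j<m. (cmod (z n j))^2 * (\<Sum>i\<in>{j-N..j+N}. (cmod (A i j))^2)) \<le> e / (K + 1)"
  proof (rule weighted_sum_eventually_le[OF _ _ vanishing_diagonals_column_band[OF A] _ z(1)])
    show "(\<lambda>n. (cmod (z n j))^2) \<longlonglongrightarrow> 0" for j
      using tendsto_power[OF tendsto_norm[OF z(2)], of j 2] by simp
  qed (use e K in \<open>auto intro: sum_nonneg\<close>)
  then show "\<forall>\<^sub>F n in sequentially.
      \<forall>m. (\<Sum>i<m. (cmod (mat_apply (schur_toeplitz c A) (z n) i))^2) \<le> e"
  proof eventually_elim
    case (elim n)
    show ?case
    proof
      fix m
      have "(\<Sum>i<m. (cmod (mat_apply (schur_toeplitz c A) (z n) i))^2)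
          \<le> K * (\<Sum>j<m+N. (cmod (z n j))^2 * (\<Sum>i\<in>{j-N..j+N}. (cmod (A i j))^2))"
        unfolding K_def by (rule schur_toeplitz_band_partial_le[OF supp c])
      also have "\<dots> \<le> K * (e / (K + 1))" using elim K by (intro mult_left_mono) auto
      also have "\<dots> \<le> e" using K e by (simp add: field_simps)
      finally show "(\<Sum>i<m. (cmod (mat_apply (schur_toeplitz c A) (z n) i))^2) \<le> e" .
    qed
  qed
qed

section \<open>Compactness\<close>

lemma diagseq_coordinatewise_convergent:
  fixes x :: "nat \<Rightarrow> nat \<Rightarrow> complex"
  assumes "\<And>n i. cmod (x n i) \<le> M"
  obtains r where "strict_mono r" "\<And>i. convergent (\<lambda>n. x (r n) i)"
proof -
  interpret subseqs "\<lambda>i s. convergent (\<lambda>n. x (s n) i)"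
  proof
    fix i and s :: "nat \<Rightarrow> nat"
    have "bounded (range (\<lambda>n. x (s n) i))"
      using assms by (intro boundedI[where B=M]) auto
    then obtain l r where r: "strict_mono r" "((\<lambda>n. x (s n) i) \<circ> r) \<longlonglongrightarrow> l"
      using bounded_imp_convergent_subsequence by blast
    then have "convergent (\<lambda>n. x ((s \<circ> r) n) i)" unfolding convergent_def by (auto simp: o_def)
    with r(1) show "\<exists>r'. strict_mono r' \<and> convergent (\<lambda>n. x ((s \<circ> r') n) i)" by blast
  qed
  have "convergent (\<lambda>n. x (diagseq n) i)" for i
  proof -
    have "convergent (\<lambda>n. x ((diagseq \<circ> (+) (Suc i)) n) i)"
    proof (rule diagseq_holds)
      fix r s n assume "strict_mono (r :: nat \<Rightarrow> nat)" "convergent (\<lambda>m. x (s m) n)"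
      then show "convergent (\<lambda>m. x ((s \<circ> r) m) n)"
        using convergent_subseq_convergent[of "\<lambda>m. x (s m) n" r] by (simp add: o_def)
    qed
    then have "convergent (\<lambda>n. x (diagseq (n + Suc i)) i)" by (simp add: o_def add.commute)
    then show ?thesis by (rule convergent_ignore_initial_segment[THEN iffD1])
  qed
  with subseq_diagseq that show ?thesis by blast
qed

lemma bounded_l2_seq_coordinatewise_convergent_subseq:
  fixes x :: "nat \<Rightarrow> nat \<Rightarrow> complex"
  assumes x: "\<And>n. is_l2 (x n)" "\<And>n. l2norm (x n) \<le> M"
  obtains r x0 where "strict_mono r" "is_l2 x0" "l2norm x0 \<le> M" "\<And>i. (\<lambda>n. x (r n) i) \<longlonglongrightarrow> x0 i"
proof -
  have M: "M \<ge> 0" using l2norm_nonneg[OF x(1)] x(2) order_trans by blast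
  have "cmod (x n i) \<le> M" for n i using norm_le_l2norm[OF x(1)] x(2) by (rule order_trans)
  then obtain r where r: "strict_mono r" "\<And>i. convergent (\<lambda>n. x (r n) i)"
    by (rule diagseq_coordinatewise_convergent[of x M]) blast
  define x0 where "x0 i = lim (\<lambda>n. x (r n) i)" for i
  have lim: "(\<lambda>n. x (r n) i) \<longlonglongrightarrow> x0 i" for i
    unfolding x0_def using r(2) convergent_LIMSEQ_iff by blast
  have "is_l2 x0 \<and> l2norm x0 \<le> M"
  proof (rule is_l2_l2norm_leI[OF M])
    fix m
    have "(\<lambda>n. L2_set (\<lambda>i. cmod (x (r n) i)) {..<m}) \<longlonglongrightarrow> L2_set (\<lambda>i. cmod (x0 i)) {..<m}"
      unfolding L2_set_def by (intro tendsto_intros lim)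
    moreover have "\<forall>\<^sub>F n in sequentially. L2_set (\<lambda>i. cmod (x (r n) i)) {..<m} \<le> M"
      using L2_set_le_l2norm[OF x(1)] x(2) by (intro always_eventually allI) (rule order_trans)
    ultimately show "L2_set (\<lambda>i. cmod (x0 i)) {..<m} \<le> M"
      by (rule tendsto_upperbound) simp
  qed
  with r(1) lim that show ?thesis by blast
qed

lemma compact_matrixI:
  assumes A: "matrix_norm_le A C"
    and null: "\<And>z M. (\<And>n. is_l2 (z n)) \<Longrightarrow> (\<And>n. l2norm (z n) \<le> M) \<Longrightarrow>
      (\<And>j. (\<lambda>n. z n j) \<longlonglongrightarrow> 0) \<Longrightarrow> (\<lambda>n. l2norm (mat_apply A (z n))) \<longlonglongrightarrow> 0"
  shows "compact_matrix A"
  unfolding compact_matrix_def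
proof (intro allI impI)
  fix x :: "nat \<Rightarrow> nat \<Rightarrow> complex"
  assume "(\<forall>n. is_l2 (x n)) \<and> (\<exists>M. \<forall>n. l2norm (x n) \<le> M)"
  then obtain M where x: "\<And>n. is_l2 (x n)" "\<And>n. l2norm (x n) \<le> M" by blast
  obtain r x0 where r: "strict_mono r" and x0: "is_l2 x0" "l2norm x0 \<le> M"
    and lim: "\<And>i. (\<lambda>n. x (r n) i) \<longlonglongrightarrow> x0 i"
    by (rule bounded_l2_seq_coordinatewise_convergent_subseq[where x=x and M=M, OF x]) blast
  define z where "z n = (\<lambda>j. x (r n) j - x0 j)" for n
  have z: "is_l2 (z n)" "l2norm (z n) \<le> M + M" for n
    using l2norm_diff_le[OF x(1) x0(1), of "r n"] x(2)[of "r n"] x0(2) unfolding z_def by auto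
  have "(\<lambda>n. z n j) \<longlonglongrightarrow> 0" for j
    using tendsto_diff[OF lim tendsto_const, of j "x0 j"] unfolding z_def by simp
  then have "(\<lambda>n. l2norm (mat_apply A (z n))) \<longlonglongrightarrow> 0" by (rule null[OF z])
  moreover have "(\<lambda>i. mat_apply A (x (r n)) i - mat_apply A x0 i) = mat_apply A (z n)" for n
    unfolding z_def by (intro mat_apply_diff matrix_norm_leD(1)[OF A] x(1) x0(1))
  ultimately have "(\<lambda>n. l2norm (\<lambda>i. mat_apply A (x (r n)) i - mat_apply A x0 i)) \<longlonglongrightarrow> 0"
    by simp
  with r matrix_norm_leD(2)[OF A x0(1)] show "\<exists>r y. strict_mono r \<and> is_l2 y \<and>
      (\<lambda>n. l2norm (\<lambda>i. mat_apply A (x (r n)) i - y i)) \<longlonglongrightarrow> 0"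
    by blast
qed

section \<open>Square-summable symbols\<close>

definition l2norm_int :: "(int \<Rightarrow> complex) \<Rightarrow> real" where
  "l2norm_int b = sqrt (\<Sum>\<^sub>\<infinity>p. (cmod (b p))^2)"

definition symbol_trunc :: "nat \<Rightarrow> (int \<Rightarrow> complex) \<Rightarrow> int \<Rightarrow> complex" where
  "symbol_trunc N b p = (if \<bar>p\<bar> \<le> int N then b p else 0)"

lemma l2norm_int_nonneg: "l2norm_int b \<ge> 0"
  unfolding l2norm_int_def by (simp add: infsum_nonneg)

lemma sum_le_l2norm_int_sq:
  assumes "(\<lambda>p. (cmod (b p))^2) summable_on UNIV" "finite F"
  shows "(\<Sum>p\<in>F. (cmod (b p))^2) \<le> (l2norm_int b)^2"
proof -
  have "(\<Sum>\<^sub>\<infinity>p. (cmod (b p))^2) \<ge> 0" by (rule infsum_nonneg) simp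
  with finite_sum_le_infsum[OF assms(1,2)] show ?thesis unfolding l2norm_int_def by simp
qed

lemma norm_le_l2norm_int:
  assumes "(\<lambda>p. (cmod (b p))^2) summable_on UNIV"
  shows "cmod (b p) \<le> l2norm_int b"
proof -
  have "(cmod (b p))^2 \<le> (l2norm_int b)^2" using sum_le_l2norm_int_sq[OF assms, of "{p}"] by simp
  then show ?thesis using l2norm_int_nonneg by (rule power2_le_imp_le)
qed

lemma matrix_norm_le_schur_toeplitz_l2:
  assumes "matrix_norm_le A C" "(\<lambda>p. (cmod (b p))^2) summable_on UNIV"
  shows "matrix_norm_le (schur_toeplitz b A) (C * l2norm_int b)"
  by (rule matrix_norm_le_schur_toeplitz[OF assms(1) l2norm_int_nonneg sum_le_l2norm_int_sq[OF assms(2)]])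

lemma sum_sq_symbol_tail_le:
  assumes b: "(\<lambda>p. (cmod (b p))^2) summable_on UNIV" and e: "e > 0"
  obtains N where "\<And>F. finite F \<Longrightarrow> (\<Sum>p\<in>F. (cmod (b p - symbol_trunc N b p))^2) \<le> e"
proof -
  define f where "f p = (cmod (b p))^2" for p
  define S where "S = (\<Sum>\<^sub>\<infinity>p. f p)"
  have "(sum f \<longlongrightarrow> S) (finite_subsets_at_top UNIV)"
    using b unfolding S_def f_def has_sum_def[symmetric] by simp
  from tendstoD[OF this e] obtain F0 where F0: "finite F0"
    "\<And>F. finite F \<Longrightarrow> F0 \<subseteq> F \<Longrightarrow> dist (sum f F) S < e"
    unfolding eventually_finite_subsets_at_top by auto
  define N where "N = nat (Max (insert 0 (abs ` F0)))"
  have N: "\<bar>p\<bar> \<le> int N" if "p \<in> F0" for p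
  proof -
    have "\<bar>p\<bar> \<le> Max (insert 0 (abs ` F0))" using F0(1) that by (intro Max_ge) auto
    then show ?thesis unfolding N_def by linarith
  qed
  have "(\<Sum>p\<in>F. (cmod (b p - symbol_trunc N b p))^2) \<le> e" if F: "finite F" for F
  proof -
    define G where "G = {p\<in>F. \<not> \<bar>p\<bar> \<le> int N}"
    have G: "finite G" "F0 \<inter> G = {}" using F N unfolding G_def by auto
    have "(\<Sum>p\<in>F. (cmod (b p - symbol_trunc N b p))^2) = (\<Sum>p\<in>F. if \<not> \<bar>p\<bar> \<le> int N then f p else 0)"
      unfolding f_def symbol_trunc_def by (intro sum.cong) auto
    also have "\<dots> = sum f G" unfolding G_def using F by (rule sum.inter_filter[symmetric])
    also have "\<dots> = sum f (F0 \<union> G) - sum f F0" using G F0(1) by (simp add: sum.union_disjoint)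
    also have "sum f (F0 \<union> G) \<le> S"
      unfolding S_def f_def using b G(1) F0(1) by (intro finite_sum_le_infsum) auto
    also have "S - sum f F0 < e"
      using F0(2)[OF F0(1) subset_refl] by (simp add: dist_real_def abs_less_iff)
    finally show ?thesis by simp
  qed
  with that show ?thesis by blast
qed

lemma l2norm_schur_toeplitz_le:
  assumes "matrix_norm_le (schur_toeplitz c A) C1"
    and "matrix_norm_le (schur_toeplitz (\<lambda>p. b p - c p) A) C2" and z: "is_l2 z"
  shows "l2norm (mat_apply (schur_toeplitz b A) z)
    \<le> l2norm (mat_apply (schur_toeplitz c A) z) + C2 * l2norm z"
proof -
  let ?d = "\<lambda>p. b p - c p"
  have "schur_toeplitz b A = (\<lambda>i j. schur_toeplitz c A i j + schur_toeplitz ?d A i j)"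
    by (auto simp: schur_toeplitz_def fun_eq_iff algebra_simps)
  then have "mat_apply (schur_toeplitz b A) z
      = (\<lambda>i. mat_apply (schur_toeplitz c A) z i + mat_apply (schur_toeplitz ?d A) z i)"
    using matrix_norm_leD(1)[OF assms(1) z] matrix_norm_leD(1)[OF assms(2) z]
    by (simp add: mat_apply_add_matrix)
  then have "l2norm (mat_apply (schur_toeplitz b A) z)
      \<le> l2norm (mat_apply (schur_toeplitz c A) z) + l2norm (mat_apply (schur_toeplitz ?d A) z)"
    using l2norm_add_le[OF matrix_norm_leD(2)[OF assms(1) z] matrix_norm_leD(2)[OF assms(2) z]]
    by simp
  with matrix_norm_leD(3)[OF assms(2) z] show ?thesis by simp
qed

lemma schur_toeplitz_null:
  assumes A: "matrix_norm_le A C" "vanishing_diagonals A"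
    and b: "(\<lambda>p. (cmod (b p))^2) summable_on UNIV"
    and z: "\<And>n. is_l2 (z n)" "\<And>n. l2norm (z n) \<le> M" "\<And>j. (\<lambda>n. z n j) \<longlonglongrightarrow> 0"
  shows "(\<lambda>n. l2norm (mat_apply (schur_toeplitz b A) (z n))) \<longlonglongrightarrow> 0"
proof (rule tendsto_zero_if_approx)
  show "l2norm (mat_apply (schur_toeplitz b A) (z n)) \<ge> 0" for n
    by (intro l2norm_nonneg matrix_norm_leD(2)[OF matrix_norm_le_schur_toeplitz_l2[OF A(1) b] z(1)])
  have C: "C \<ge> 0" by (rule matrix_norm_le_nonneg[OF A(1)])
  have M: "M \<ge> 0" using l2norm_nonneg[OF z(1)] z(2) order_trans by blast
  fix e :: real assume e: "e > 0"
  define t where "t = e / (C * M + 1)"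
  have CM: "C * M \<ge> 0" using C M by simp
  have t: "t > 0" "C * t * M \<le> e"
  proof -
    show "t > 0" unfolding t_def using CM e by simp
    have "C * t * M = e * (C * M) / (C * M + 1)" unfolding t_def by simp
    also have "\<dots> \<le> e" using CM e by (simp add: pos_divide_le_eq)
    finally show "C * t * M \<le> e" .
  qed
  obtain N where "\<And>F. finite F \<Longrightarrow> (\<Sum>p\<in>F. (cmod (b p - symbol_trunc N b p))^2) \<le> t^2"
    using sum_sq_symbol_tail_le[OF b, of "t^2"] t(1) by auto
  then have tail: "matrix_norm_le (schur_toeplitz (\<lambda>p. b p - symbol_trunc N b p) A) (C * t)"
    using t(1) by (intro matrix_norm_le_schur_toeplitz[OF A(1)]) auto
  have "(\<Sum>p\<in>F. (cmod (symbol_trunc N b p))^2) \<le> (l2norm_int b)^2" if "finite F" for F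
    using sum_le_l2norm_int_sq[OF b that]
    by (rule order_trans[rotated]) (rule sum_mono, simp add: symbol_trunc_def)
  then have trunc: "matrix_norm_le (schur_toeplitz (symbol_trunc N b) A) (C * l2norm_int b)"
    by (intro matrix_norm_le_schur_toeplitz[OF A(1) l2norm_int_nonneg])
  have "(\<lambda>n. l2norm (mat_apply (schur_toeplitz (symbol_trunc N b) A) (z n))) \<longlonglongrightarrow> 0"
  proof (rule schur_toeplitz_band_null[where N=N, OF A(2)])
    show "(\<Sum>j<m. (cmod (z n j))^2) \<le> M^2" for n m
      using sum_sq_le_l2norm_sq[OF z(1)] power_mono[OF z(2) l2norm_nonneg[OF z(1)]] by (rule order_trans)
    show "cmod (symbol_trunc N b p) \<le> l2norm_int b" for p
      using norm_le_l2norm_int[OF b] l2norm_int_nonneg by (simp add: symbol_trunc_def)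
  qed (auto simp: symbol_trunc_def z(3))
  moreover have "l2norm (mat_apply (schur_toeplitz b A) (z n))
      \<le> l2norm (mat_apply (schur_toeplitz (symbol_trunc N b) A) (z n)) + e" for n
  proof -
    have "C * t * l2norm (z n) \<le> C * t * M" using C t(1) by (intro mult_left_mono z(2)) simp
    then show ?thesis
      using l2norm_schur_toeplitz_le[OF trunc tail z(1), of n] t(2) by linarith
  qed
  ultimately show "\<exists>u. u \<longlonglongrightarrow> 0 \<and> (\<forall>n. l2norm (mat_apply (schur_toeplitz b A) (z n)) \<le> u n + e)"
    by blast
qed

theorem lemma2:
  fixes V :: "nat \<Rightarrow> nat \<Rightarrow> complex" and b :: "int \<Rightarrow> complex"
  assumes "bounded_matrix V"
    and "\<not> compact_matrix V"
    and "\<forall>p::int. (\<lambda>n. V n (nat (int n + p))) \<longlonglongrightarrow> 0"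
    and "(\<lambda>i. (cmod (b i))^2) summable_on UNIV"
  shows "bounded_matrix (\<lambda>i j. b (int i - int j) * V i j) \<and>
         compact_matrix (\<lambda>i j. b (int i - int j) * V i j)"
proof -
  from assms(1) obtain C where V: "matrix_norm_le V C" unfolding bounded_matrix_iff ..
  have diagonals: "vanishing_diagonals V" unfolding vanishing_diagonals_def by (rule assms(3))
  have bounded: "matrix_norm_le (schur_toeplitz b V) (C * l2norm_int b)"
    by (rule matrix_norm_le_schur_toeplitz_l2[OF V assms(4)])
  have "compact_matrix (schur_toeplitz b V)"
    using bounded by (rule compact_matrixI) (rule schur_toeplitz_null[OF V diagonals assms(4)])
  with bounded show ?thesis unfolding bounded_matrix_iff schur_toeplitz_def by blast
qed

end
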